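(* Let $a>0$ and let $k$ be a positive integer. Let $\psi(t)=\sum_{n\ge1}e^{-\pi n^2 t/a}$, $\phi(t)=\sum_{n\ge1}e^{-\pi n^2 a t}$, and \[\epsilon_{2k}(a)=\frac{1}{4\pi a}\int_1^\infty \{\psi(t)+a^{1/2}\phi(t)\}\,\frac{(t-1)^{2k}}{(1+t)^{2k+3/2}}\,dt.\] Let $\Psi(\tau)=\sum_{n\ge1}e^{-\pi n^2\tau}$ for $\tau>0$ and $E_{2k}(a)=a^{1/4}\Psi(a)\,U(2k+1,\tfrac12,2\pi a)$. Then \[\epsilon_{2k}(a)<\mathcal{B}_{2k}(a):=\frac{a^{-3/4}(2k)!}{4\sqrt{2}\,\pi}\{E_{2k}(a)+E_{2k}(1/a)\}.\]
   Context: $U(\alpha,b,z)$ denotes the confluent hypergeometric function of the second kind (Tricomi's function), which for $\alpha>0$, $\Re z>0$ has the representation $U(\alpha,b,z)=\frac{1}{\Gamma(\alpha)}\int_0^\infty e^{-zt}t^{\alpha-1}(1+t)^{b-\alpha-1}dt$. *)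

theory Defs
  imports "HOL-Analysis.Analysis"
begin

text \<open>Tricomi's confluent hypergeometric function U(alpha,b,z) for real alpha > 0, z > 0,
  via its integral representation.\<close>
definition tricomiU :: "real \<Rightarrow> real \<Rightarrow> real \<Rightarrow> real" where
  "tricomiU \<alpha> b z = (1 / Gamma \<alpha>) *
     (LBINT t:{0<..}. exp (- z * t) * t powr (\<alpha> - 1) * (1 + t) powr (b - \<alpha> - 1))"

definition PsiTheta :: "real \<Rightarrow> real" where
  "PsiTheta \<tau> = (\<Sum>n. exp (- pi * (real (Suc n))\<^sup>2 * \<tau>))"

definition psiA :: "real \<Rightarrow> real \<Rightarrow> real" where
  "psiA a t = (\<Sum>n. exp (- pi * (real (Suc n))\<^sup>2 * t / a))"

definition phiA :: "real \<Rightarrow> real \<Rightarrow> real" where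
  "phiA a t = (\<Sum>n. exp (- pi * (real (Suc n))\<^sup>2 * a * t))"

definition epsilon :: "nat \<Rightarrow> real \<Rightarrow> real" where
  "epsilon k a = 1 / (4 * pi * a) *
     (LBINT t:{1..}. (psiA a t + a powr (1/2) * phiA a t) *
        ((t - 1) ^ (2 * k) / (1 + t) powr (real (2 * k) + 3 / 2)))"

definition E_fun :: "nat \<Rightarrow> real \<Rightarrow> real" where
  "E_fun k a = a powr (1/4) * PsiTheta a * tricomiU (real (2 * k + 1)) (1/2) (2 * pi * a)"

definition B_bound :: "nat \<Rightarrow> real \<Rightarrow> real" where
  "B_bound k a = a powr (-3/4) * fact (2 * k) / (4 * sqrt 2 * pi) * (E_fun k a + E_fun k (1 / a))"

end

theory Submission
  imports Defs
begin

text \<open>For \<open>n \<ge> 1\<close> and \<open>t > 1\<close> one has \<open>n\<^sup>2 x t \<ge> n\<^sup>2 x + x (t - 1)\<close>, strictly unless \<open>n = 1\<close>, so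
  \<open>\<Psi>(x t) < \<Psi>(x) exp(-\<pi> x (t - 1))\<close>. Since \<open>\<psi>(t) = \<Psi>(t/a)\<close> and \<open>\<phi>(t) = \<Psi>(a t)\<close>, the integrand of
  \<open>\<epsilon>\<^sub>2\<^sub>k(a)\<close> is strictly dominated by \<open>\<Psi>(1/a) exp(-\<pi>(t - 1)/a) + a\<^sup>1\<^sup>/\<^sup>2 \<Psi>(a) exp(-\<pi>a(t - 1))\<close> times
  the weight, and the substitution \<open>t = 1 + 2s\<close> turns the integral of each exponential against the
  weight into Tricomi's integral for \<open>(2k)! U(2k+1, 1/2, z) / \<surd>2\<close> with \<open>z = 2\<pi>/a\<close> resp. \<open>z = 2\<pi>a\<close>.\<close>

lemma emeasure_lborel_Ioi_ne_zero: "emeasure lborel {(c :: real)<..} \<noteq> 0"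
proof -
  have "emeasure lborel {c<..<c + 1} \<le> emeasure lborel {c<..}"
    by (intro emeasure_mono) auto
  then show ?thesis
    by auto
qed

lemma suminf_strict_mono:
  fixes f g :: "nat \<Rightarrow> real"
  assumes "summable f" "summable g" "\<And>n. f n \<le> g n" "f i < g i"
  shows "suminf f < suminf g"
proof -
  have "0 < (\<Sum>n. g n - f n)"
    using assms by (intro suminf_pos2[where i = i] summable_diff) auto
  also have "\<dots> = suminf g - suminf f"
    using assms(1,2) by (simp add: suminf_diff)
  finally show ?thesis by simp
qed

lemma set_integral_strict_mono:
  fixes f g :: "'a \<Rightarrow> real"
  assumes "set_integrable M A f" "set_integrable M A g" "A \<in> sets M" "emeasure M A \<noteq> 0"
    and "\<And>x. x \<in> A \<Longrightarrow> f x < g x"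
  shows "(LINT x:A|M. f x) < (LINT x:A|M. g x)"
proof -
  let ?h = "\<lambda>x. indicator A x * (g x - f x)"
  have int: "integrable M ?h"
    using set_integral_diff(1)[OF assms(2,1)] by (simp add: set_integrable_def)
  have nonneg: "AE x in M. 0 \<le> ?h x"
    using assms(5) by (intro AE_I2) (auto simp: indicator_def less_imp_le)
  have "integral\<^sup>L M ?h \<noteq> 0"
  proof
    assume "integral\<^sup>L M ?h = 0"
    then have "AE x in M. ?h x = 0"
      using integral_nonneg_eq_0_iff_AE[OF int nonneg] by simp
    then have "AE x in M. x \<notin> A"
      by eventually_elim (use assms(5) in \<open>fastforce simp: indicator_def\<close>)
    then have "A \<in> null_sets M"
      using AE_iff_null_sets[OF assms(3)] by simp
    then show False
      using assms(4) by (simp add: null_sets_def)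
  qed
  moreover have "0 \<le> integral\<^sup>L M ?h"
    using nonneg by (rule integral_nonneg_AE)
  ultimately have "0 < (LINT x:A|M. g x - f x)"
    by (simp add: set_lebesgue_integral_def)
  then show ?thesis
    using assms(1,2) by simp
qed

lemma PsiTheta_summable:
  fixes x :: real
  assumes "0 < x"
  shows "summable (\<lambda>n. exp (- pi * (real (Suc n))\<^sup>2 * x))"
proof (rule summable_comparison_test')
  show "summable (\<lambda>n. exp (- pi * x) ^ n)"
    using assms by (intro summable_geometric) simp
  fix n :: nat
  have "n \<le> (Suc n)\<^sup>2"
    by (simp add: power2_eq_square)
  then have "real n \<le> (real (Suc n))\<^sup>2"
    by (metis of_nat_le_iff of_nat_power)
  then have "pi * x * real n \<le> pi * x * (real (Suc n))\<^sup>2"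
    using assms by (intro mult_left_mono) auto
  then show "norm (exp (- pi * (real (Suc n))\<^sup>2 * x)) \<le> exp (- pi * x) ^ n"
    by (simp add: exp_of_nat_mult[symmetric] mult.commute mult.left_commute)
qed

lemma PsiTheta_pos: "0 < x \<Longrightarrow> 0 < PsiTheta x"
  unfolding PsiTheta_def by (intro suminf_pos PsiTheta_summable) auto

lemma psiA_eq_PsiTheta: "psiA a t = PsiTheta (t / a)"
  by (simp add: psiA_def PsiTheta_def)

lemma phiA_eq_PsiTheta: "phiA a t = PsiTheta (a * t)"
  by (simp add: phiA_def PsiTheta_def mult.assoc)

lemma PsiTheta_mult_less:
  assumes "0 < x" "1 < t"
  shows "PsiTheta (x * t) < PsiTheta x * exp (- pi * x * (t - 1))"
proof -
  let ?f = "\<lambda>n. exp (- pi * (real (Suc n))\<^sup>2 * (x * t))"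
  let ?g = "\<lambda>n. exp (- pi * (real (Suc n))\<^sup>2 * x) * exp (- pi * x * (t - 1))"
  have gap: "- pi * m\<^sup>2 * (x * t) = (- pi * m\<^sup>2 * x + - pi * x * (t - 1)) - pi * x * (t - 1) * (m\<^sup>2 - 1)"
    for m :: real
    by (simp add: algebra_simps)
  have "?f n \<le> ?g n" for n
  proof -
    have "0 \<le> pi * x * (t - 1) * ((real (Suc n))\<^sup>2 - 1)"
      using assms by (intro mult_nonneg_nonneg) auto
    then show ?thesis
      by (subst gap) (simp add: exp_add[symmetric])
  qed
  moreover have "?f 1 < ?g 1"
  proof -
    have "0 < pi * x * (t - 1) * ((real (Suc 1))\<^sup>2 - 1)"
      using assms by simp
    then show ?thesis
      by (subst gap) (simp add: exp_add[symmetric] del: of_nat_Suc)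
  qed
  moreover have "summable ?f" "summable ?g"
    using assms PsiTheta_summable[of x] PsiTheta_summable[of "x * t"]
    by (auto intro: summable_mult2)
  ultimately have "suminf ?f < suminf ?g"
    by (intro suminf_strict_mono)
  also have "suminf ?g = PsiTheta x * exp (- pi * x * (t - 1))"
    unfolding PsiTheta_def using PsiTheta_summable[OF assms(1)] by (simp add: suminf_mult2)
  finally show ?thesis
    by (simp add: PsiTheta_def)
qed

definition tricomi_kernel :: "real \<Rightarrow> real \<Rightarrow> real \<Rightarrow> real \<Rightarrow> real" where
  "tricomi_kernel \<alpha> b z t = exp (- z * t) * t powr (\<alpha> - 1) * (1 + t) powr (b - \<alpha> - 1)"

lemma tricomiU_eq_kernel_integral:
  "tricomiU \<alpha> b z = (LBINT t:{0<..}. tricomi_kernel \<alpha> b z t) / Gamma \<alpha>"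
  by (simp add: tricomiU_def tricomi_kernel_def)

lemma abs_tricomi_kernel_le:
  assumes "1 \<le> \<alpha>" "b \<le> 2" "0 < t"
  shows "\<bar>tricomi_kernel \<alpha> b z t\<bar> \<le> exp (- z * t)"
proof -
  have "t powr (\<alpha> - 1) * (1 + t) powr (b - \<alpha> - 1) \<le> (1 + t) powr (\<alpha> - 1) * (1 + t) powr (b - \<alpha> - 1)"
    using assms by (intro mult_right_mono powr_mono2) auto
  also have "\<dots> = (1 + t) powr (b - 2)"
    by (simp add: powr_add[symmetric])
  also have "\<dots> \<le> 1"
    using assms powr_mono[of "b - 2" 0 "1 + t"] by simp
  finally show ?thesis
    using assms by (simp add: tricomi_kernel_def abs_mult mult.assoc mult_left_le)
qed

lemma tricomi_kernel_integrable:
  assumes "1 \<le> \<alpha>" "b \<le> 2" "0 < z"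
  shows "set_integrable lborel {0<..} (tricomi_kernel \<alpha> b z)"
proof (rule set_integrable_bound)
  have "(\<lambda>t. exp (- z * t)) absolutely_integrable_on {0..}"
    using assms by (intro nonnegative_absolutely_integrable_1 integrable_on_exp_minus_to_infinity) auto
  then have "set_integrable lborel {0..} (\<lambda>t. exp (- z * t))"
    by (simp add: set_integrable_def integrable_completion)
  then show "set_integrable lborel {0<..} (\<lambda>t. exp (- z * t))"
    by (rule set_integrable_subset) auto
  show "set_borel_measurable lborel {0<..} (tricomi_kernel \<alpha> b z)"
    unfolding set_borel_measurable_def tricomi_kernel_def by measurable
  show "AE t in lborel. t \<in> {0<..} \<longrightarrow> norm (tricomi_kernel \<alpha> b z t) \<le> norm (exp (- z * t))"
    using abs_tricomi_kernel_le[OF assms(1,2)] by auto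
qed

lemma tricomi_kernel_shift:
  assumes "0 < s"
  shows "exp (- z * ((1 + 2 * s) - 1) / 2) * ((1 + 2 * s) - 1) powr (\<alpha> - 1) * (1 + (1 + 2 * s)) powr (b - \<alpha> - 1)
    = 2 powr (b - 2) * tricomi_kernel \<alpha> b z s"
proof -
  have "(2 * s) powr (\<alpha> - 1) = 2 powr (\<alpha> - 1) * s powr (\<alpha> - 1)"
    using assms by (simp add: powr_mult)
  moreover have "(1 + (1 + 2 * s)) powr (b - \<alpha> - 1) = 2 powr (b - \<alpha> - 1) * (1 + s) powr (b - \<alpha> - 1)"
    using assms powr_mult[of 2 "1 + s" "b - \<alpha> - 1"] by (simp add: algebra_simps)
  moreover have "2 powr (\<alpha> - 1) * 2 powr (b - \<alpha> - 1) = (2 powr (b - 2) :: real)"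
    by (simp add: powr_add[symmetric])
  ultimately show ?thesis
    by (simp add: tricomi_kernel_def algebra_simps)
qed

lemma has_bochner_integral_tricomi_shifted:
  assumes "1 \<le> \<alpha>" "b \<le> 2" "0 < z"
  shows "has_bochner_integral lborel
      (\<lambda>t. indicator {1<..} t * (exp (- z * (t - 1) / 2) * (t - 1) powr (\<alpha> - 1) * (1 + t) powr (b - \<alpha> - 1)))
      (2 powr (b - 1) * Gamma \<alpha> * tricomiU \<alpha> b z)"
    (is "has_bochner_integral lborel ?f _")
proof -
  let ?K = "LBINT s:{0<..}. tricomi_kernel \<alpha> b z s"
  have "has_bochner_integral lborel (\<lambda>s. indicator {0<..} s * tricomi_kernel \<alpha> b z s) ?K"
    using tricomi_kernel_integrable[OF assms]
    by (simp add: set_integrable_def set_lebesgue_integral_def has_bochner_integral_integrable)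
  then have "has_bochner_integral lborel (\<lambda>s. 2 powr (b - 2) * (indicator {0<..} s * tricomi_kernel \<alpha> b z s))
      (2 powr (b - 2) * ?K)"
    by (rule has_bochner_integral_mult_right)
  moreover have "?f (1 + 2 * s) = 2 powr (b - 2) * (indicator {0<..} s * tricomi_kernel \<alpha> b z s)" for s
    using tricomi_kernel_shift[of s] by (cases "0 < s") (auto simp: indicator_def)
  ultimately have "has_bochner_integral lborel (\<lambda>s. ?f (1 + 2 * s)) ((2 * 2 powr (b - 2) * ?K) /\<^sub>R \<bar>2\<bar>)"
    by simp
  then have "has_bochner_integral lborel ?f (2 * 2 powr (b - 2) * ?K)"
    by (subst lborel_has_bochner_integral_real_affine_iff[where c = 2 and t = 1]) auto
  moreover have "Gamma \<alpha> \<noteq> 0"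
    using Gamma_real_pos[of \<alpha>] assms(1) by linarith
  then have "2 * 2 powr (b - 2) * ?K = 2 powr (b - 1) * Gamma \<alpha> * tricomiU \<alpha> b z"
    by (simp add: tricomiU_eq_kernel_integral powr_add[symmetric] powr_mult_base)
  ultimately show ?thesis
    by simp
qed

definition epsilon_weight :: "nat \<Rightarrow> real \<Rightarrow> real" where
  "epsilon_weight k t = (t - 1) ^ (2 * k) / (1 + t) powr (real (2 * k) + 3 / 2)"

lemma epsilon_weight_pos: "1 < t \<Longrightarrow> 0 < epsilon_weight k t"
  by (simp add: epsilon_weight_def)

lemma epsilon_weight_laplace:
  assumes "0 < z"
  shows "set_integrable lborel {1<..} (\<lambda>t. exp (- z * (t - 1) / 2) * epsilon_weight k t)"
    and "(LBINT t:{1<..}. exp (- z * (t - 1) / 2) * epsilon_weight k t)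
           = fact (2 * k) / sqrt 2 * tricomiU (real (2 * k + 1)) (1/2) z"
proof -
  let ?\<alpha> = "real (2 * k + 1)"
  have weight: "epsilon_weight k t = (t - 1) powr (?\<alpha> - 1) * (1 + t) powr (1/2 - ?\<alpha> - 1)" if "1 < t" for t
  proof -
    have "(t - 1) powr (?\<alpha> - 1) = (t - 1) ^ (2 * k)"
      using that powr_realpow[of "t - 1" "2 * k"] by simp
    moreover have "1/2 - ?\<alpha> - 1 = - (real (2 * k) + 3 / 2)"
      by simp
    then have "(1 + t) powr (1/2 - ?\<alpha> - 1) = 1 / (1 + t) powr (real (2 * k) + 3 / 2)"
      by (simp only: powr_minus_divide)
    ultimately show ?thesis
      by (simp add: epsilon_weight_def)
  qed
  have "2 powr (1/2 - 1) * Gamma ?\<alpha> = fact (2 * k) / sqrt (2 :: real)"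
    using Gamma_fact[of "2 * k", where 'a = real]
    by (simp add: add.commute powr_minus_divide powr_half_sqrt)
  then have "has_bochner_integral lborel (\<lambda>t. indicator {1<..} t * (exp (- z * (t - 1) / 2) * epsilon_weight k t))
      (fact (2 * k) / sqrt 2 * tricomiU ?\<alpha> (1/2) z)"
    using has_bochner_integral_tricomi_shifted[of ?\<alpha> "1/2" z] assms
    by (subst has_bochner_integral_cong[OF refl _ refl, where g = "\<lambda>t. indicator {1<..} t *
           (exp (- z * (t - 1) / 2) * (t - 1) powr (?\<alpha> - 1) * (1 + t) powr (1/2 - ?\<alpha> - 1))"])
       (auto simp: weight indicator_def mult.assoc)
  then show "set_integrable lborel {1<..} (\<lambda>t. exp (- z * (t - 1) / 2) * epsilon_weight k t)"
    and "(LBINT t:{1<..}. exp (- z * (t - 1) / 2) * epsilon_weight k t)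
           = fact (2 * k) / sqrt 2 * tricomiU ?\<alpha> (1/2) z"
    by (simp_all add: has_bochner_integral_iff set_integrable_def set_lebesgue_integral_def)
qed

definition epsilon_integrand :: "nat \<Rightarrow> real \<Rightarrow> real \<Rightarrow> real" where
  "epsilon_integrand k a t = (psiA a t + a powr (1/2) * phiA a t) * epsilon_weight k t"

definition epsilon_majorant :: "nat \<Rightarrow> real \<Rightarrow> real \<Rightarrow> real" where
  "epsilon_majorant k a t =
     (PsiTheta (1 / a) * exp (- (2 * pi / a) * (t - 1) / 2)
       + a powr (1/2) * PsiTheta a * exp (- (2 * pi * a) * (t - 1) / 2)) * epsilon_weight k t"

lemma epsilon_integrand_measurable [measurable]: "epsilon_integrand k a \<in> borel_measurable borel"
  unfolding epsilon_integrand_def psiA_def phiA_def epsilon_weight_def by measurable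

lemma epsilon_eq_integral:
  "epsilon k a = (LBINT t:{1<..}. epsilon_integrand k a t) / (4 * pi * a)"
proof -
  have "set_borel_measurable lborel A (epsilon_integrand k a)" if "A \<in> sets lborel" for A
    unfolding set_borel_measurable_def using that by measurable
  then have "(LBINT t:{1..}. epsilon_integrand k a t) = (LBINT t:{1<..}. epsilon_integrand k a t)"
    using AE_lborel_singleton[of 1] by (intro set_integral_cong_set) (auto elim!: eventually_mono)
  then show ?thesis
    by (simp add: epsilon_def epsilon_integrand_def epsilon_weight_def)
qed

lemma epsilon_integrand_nonneg:
  assumes "0 < a" "1 < t"
  shows "0 \<le> epsilon_integrand k a t"
  using assms epsilon_weight_pos[OF assms(2), of k]
  by (simp add: epsilon_integrand_def psiA_eq_PsiTheta phiA_eq_PsiTheta PsiTheta_pos less_imp_le)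

lemma epsilon_integrand_less_majorant:
  assumes "0 < a" "1 < t"
  shows "epsilon_integrand k a t < epsilon_majorant k a t"
proof -
  have "psiA a t < PsiTheta (1 / a) * exp (- (2 * pi / a) * (t - 1) / 2)"
    using PsiTheta_mult_less[of "1 / a" t] assms by (simp add: psiA_eq_PsiTheta)
  moreover have "phiA a t < PsiTheta a * exp (- (2 * pi * a) * (t - 1) / 2)"
    using PsiTheta_mult_less[of a t] assms by (simp add: phiA_eq_PsiTheta mult.assoc)
  ultimately have "psiA a t + a powr (1/2) * phiA a t
      < PsiTheta (1 / a) * exp (- (2 * pi / a) * (t - 1) / 2)
        + a powr (1/2) * PsiTheta a * exp (- (2 * pi * a) * (t - 1) / 2)"
    using assms by (simp add: mult.assoc add_strict_mono)
  then show ?thesis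
    unfolding epsilon_integrand_def epsilon_majorant_def
    using epsilon_weight_pos[OF assms(2)] by (rule mult_strict_right_mono)
qed

lemma epsilon_majorant_integral:
  assumes "0 < a"
  shows "set_integrable lborel {1<..} (epsilon_majorant k a)"
    and "(LBINT t:{1<..}. epsilon_majorant k a t) / (4 * pi * a) = B_bound k a"
proof -
  define L where "L z t = exp (- z * (t - 1) / 2) * epsilon_weight k t" for z t
  define U where "U z = fact (2 * k) / sqrt 2 * tricomiU (real (2 * k + 1)) (1/2) z" for z
  have majorant: "epsilon_majorant k a = (\<lambda>t. PsiTheta (1 / a) * L (2 * pi / a) t + a powr (1/2) * PsiTheta a * L (2 * pi * a) t)"
    by (simp add: fun_eq_iff epsilon_majorant_def L_def algebra_simps)
  have L: "set_integrable lborel {1<..} (L z)" "(LBINT t:{1<..}. L z t) = U z" if "0 < z" for z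
    unfolding L_def U_def using epsilon_weight_laplace[OF that] by simp_all
  then show "set_integrable lborel {1<..} (epsilon_majorant k a)"
    unfolding majorant using assms by (intro set_integral_add set_integrable_mult_right) auto
  have "(LBINT t:{1<..}. epsilon_majorant k a t) = PsiTheta (1 / a) * U (2 * pi / a) + a powr (1/2) * PsiTheta a * U (2 * pi * a)"
    unfolding majorant using assms L by (simp add: set_integral_add set_integrable_mult_right)
  also have "\<dots> = 4 * pi * a * B_bound k a"
  proof -
    have "a powr (-3/4) * a powr (1/4) = a powr (1/2 - 1)"
      by (simp add: powr_add[symmetric])
    also have "\<dots> = a powr (1/2) / a"
      using assms powr_diff[of a "1/2" 1] by simp
    finally have a1: "a powr (-3/4) * a powr (1/4) = a powr (1/2) / a" .
    have a2: "a powr (-3/4) * (1 / a) powr (1/4) = 1 / a"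
      using assms by (simp add: powr_divide powr_add[symmetric] powr_minus_divide[symmetric])
    have "B_bound k a = fact (2 * k) / (4 * sqrt 2 * pi) *
        ((a powr (-3/4) * a powr (1/4)) * PsiTheta a * tricomiU (real (2 * k + 1)) (1/2) (2 * pi * a)
          + (a powr (-3/4) * (1 / a) powr (1/4)) * PsiTheta (1 / a) * tricomiU (real (2 * k + 1)) (1/2) (2 * pi / a))"
      unfolding B_bound_def E_fun_def by (simp add: algebra_simps)
    then show ?thesis
      unfolding a1 a2 U_def using assms by (simp add: field_simps)
  qed
  finally show "(LBINT t:{1<..}. epsilon_majorant k a t) / (4 * pi * a) = B_bound k a"
    using assms by simp
qed

lemma epsilon_integrand_integrable:
  assumes "0 < a"
  shows "set_integrable lborel {1<..} (epsilon_integrand k a)"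
proof (rule set_integrable_bound[OF epsilon_majorant_integral(1)[OF assms]])
  show "set_borel_measurable lborel {1<..} (epsilon_integrand k a)"
    unfolding set_borel_measurable_def by measurable
  show "AE t in lborel. t \<in> {1<..} \<longrightarrow> norm (epsilon_integrand k a t) \<le> norm (epsilon_majorant k a t)"
  proof (intro AE_I2 impI)
    fix t :: real
    assume "t \<in> {1<..}"
    then have "0 \<le> epsilon_integrand k a t" "epsilon_integrand k a t < epsilon_majorant k a t"
      using epsilon_integrand_nonneg[OF assms] epsilon_integrand_less_majorant[OF assms] by auto
    then show "norm (epsilon_integrand k a t) \<le> norm (epsilon_majorant k a t)"
      by simp
  qed
qed

theorem theorem3:
  fixes a :: real and k :: nat
  assumes "a > 0" and "k \<ge> 1"
  shows "epsilon k a < B_bound k a"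
proof -
  have "epsilon k a = (LBINT t:{1<..}. epsilon_integrand k a t) / (4 * pi * a)"
    by (rule epsilon_eq_integral)
  also have "\<dots> < (LBINT t:{1<..}. epsilon_majorant k a t) / (4 * pi * a)"
    using set_integral_strict_mono[OF epsilon_integrand_integrable epsilon_majorant_integral(1)]
      epsilon_integrand_less_majorant emeasure_lborel_Ioi_ne_zero assms
    by (simp add: divide_strict_right_mono)
  also have "\<dots> = B_bound k a"
    using epsilon_majorant_integral(2)[OF assms(1)] .
  finally show ?thesis .
qed

end
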